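(* Let $U=\{z\in\mathbb{C}: |z|<1\}$ and, for $k\in\mathbb{C}$, let $$\Sigma_k=\{w=0\}\cup\{w=1\}\cup\{w=kz\}\cup\{zw=1\}\subset\mathbb{C}^2,$$ where $(z,w)$ are the coordinates on $\mathbb{C}^2$. Then there exists $k>0$ such that for every holomorphic function $f\colon U\to\mathbb{C}$ the graph $\{(z,f(z)): z\in U\}$ intersects $\Sigma_k$ (indeed this holds for every $k\in\mathbb{C}$ with $|k|$ sufficiently large). On the other hand, for every $k$ there exists a smooth function $U\to\mathbb{C}$ whose graph does not intersect $\Sigma_k$. *)

theory Defs
  imports "HOL-Analysis.Analysis"
begin

fun Ck_on :: "nat \<Rightarrow> 'a::real_normed_vector set \<Rightarrow> ('a \<Rightarrow> 'b::real_normed_vector) \<Rightarrow> bool" where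
  "Ck_on 0 S f = continuous_on S f"
| "Ck_on (Suc n) S f = (\<exists>f'. (\<forall>x\<in>S. (f has_derivative f' x) (at x)) \<and>
                             (\<forall>v. Ck_on n S (\<lambda>x. f' x v)))"

definition smooth_on :: "'a::real_normed_vector set \<Rightarrow> ('a \<Rightarrow> 'b::real_normed_vector) \<Rightarrow> bool" where
  "smooth_on S f = (\<forall>n. Ck_on n S f)"

definition graph_meets_Sigma :: "complex \<Rightarrow> complex set \<Rightarrow> (complex \<Rightarrow> complex) \<Rightarrow> bool" where
  "graph_meets_Sigma k S f = (\<exists>z\<in>S. f z = 0 \<or> f z = 1 \<or> f z = k * z \<or> z * f z = 1)"

end

theory Submission
  imports Defs "HOL-Complex_Analysis.Complex_Analysis"
begin

(* Let f be holomorphic on the unit disc. If f omits 0 and 1, then either |f 0| is bounded,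
   and Schottky's theorem bounds f on the disc of radius 1/4, so that for |k| large
   z \<mapsto> f z / k maps that disc into itself; or |f 0| is large, and then 1/f, which also
   omits 0 and 1, is small at 0 and hence, by Montel's and Hurwitz's theorems, at most 1/4
   on the disc of radius 1/4. In both cases Brouwer's fixed point theorem gives a point with
   f z = k z, resp. z f z = 1.
   Without holomorphy there is no such rigidity, and an explicit smooth function with
   values on a ray avoids all four pieces of Sigma_k. *)

lemma Schottky_ball:
  fixes M t :: real
  assumes t: "0 < t" "t < 1"
  obtains B where "\<And>h z. h holomorphic_on ball 0 1 \<Longrightarrow> (\<forall>w\<in>ball 0 1. h w \<noteq> 0 \<and> h w \<noteq> 1)
                    \<Longrightarrow> norm (h 0) \<le> M \<Longrightarrow> norm z \<le> t \<Longrightarrow> norm (h z) \<le> B"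
proof -
  define s where "s = (1 + t) / 2"
  have s: "0 < s" "s < 1" "t < s"
    using t by (auto simp: s_def)
  define B where "B = exp (pi * exp (pi * (2 + 2 * M + 12 * (t / s) / (1 - t / s))))"
  show thesis
  proof (rule that)
    fix h and z :: complex
    assume hol: "h holomorphic_on ball 0 1" and omit: "\<forall>w\<in>ball 0 1. h w \<noteq> 0 \<and> h w \<noteq> 1"
      and h0: "norm (h 0) \<le> M" and z: "norm z \<le> t"
    have "of_real s * w \<in> ball 0 1" if "w \<in> cball 0 1" for w :: complex
    proof -
      have "norm (of_real s * w) \<le> s"
        using mult_left_le[of "norm w" s] that s by (simp add: norm_mult)
      then show ?thesis
        using s by simp
    qed
    then have into_ball: "(*) (complex_of_real s) ` cball 0 1 \<subseteq> ball 0 1"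
      by blast
    have "(\<lambda>w. h (of_real s * w)) holomorphic_on cball 0 1"
      using holomorphic_on_compose_gen[OF _ hol into_ball] by (simp add: o_def holomorphic_intros)
    moreover have "norm (z / of_real s) \<le> t / s"
      using z s by (simp add: norm_divide divide_right_mono)
    ultimately have "norm (h (of_real s * (z / of_real s))) \<le> B"
      unfolding B_def using Schottky[of "\<lambda>w. h (of_real s * w)" M "t / s"] h0 omit into_ball s t
      by force
    then show "norm (h z) \<le> B"
      using s by simp
  qed
qed

lemma Hurwitz_zero_imp_identically_zero:
  assumes S: "open S" "connected S"
    and hol: "\<And>n. F n holomorphic_on S" and "G holomorphic_on S"
    and lim: "\<And>K. compact K \<Longrightarrow> K \<subseteq> S \<Longrightarrow> uniform_limit K F G sequentially"
    and nonzero: "\<And>n z. z \<in> S \<Longrightarrow> F n z \<noteq> 0"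
    and "a \<in> S" "G a = 0" "z \<in> S"
  shows "G z = 0"
proof (cases "G constant_on S")
  case True
  then show ?thesis
    using \<open>a \<in> S\<close> \<open>G a = 0\<close> \<open>z \<in> S\<close> by (metis constant_on_def)
next
  case False
  then show ?thesis
    using Hurwitz_no_zeros[OF S hol \<open>G holomorphic_on S\<close> lim False nonzero \<open>a \<in> S\<close>] \<open>G a = 0\<close>
    by blast
qed

lemma omitting_01_subseq_uniform_limit_0:
  fixes H :: "nat \<Rightarrow> complex \<Rightarrow> complex"
  assumes S: "open S" "connected S" "a \<in> S"
    and hol: "\<And>n. H n holomorphic_on S"
    and omit: "\<And>n z. z \<in> S \<Longrightarrow> H n z \<noteq> 0 \<and> H n z \<noteq> 1"
    and lim: "(\<lambda>n. H n a) \<longlonglongrightarrow> 0"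
  obtains r where "strict_mono r"
    "\<And>K. compact K \<Longrightarrow> K \<subseteq> S \<Longrightarrow> uniform_limit K (H \<circ> r) (\<lambda>_. 0) sequentially"
proof -
  obtain N where N: "\<And>n. n \<ge> N \<Longrightarrow> norm (H n a) < 1"
    using LIMSEQ_D[OF lim, of 1] by auto
  \<comment> \<open>GPicard3 needs the normalisation |h a| \<le> 1 on the whole family, so pass to a tail.\<close>
  define T where "T n = H (n + N)" for n
  have bounded: "\<exists>B. \<forall>h\<in>range T. \<forall>z\<in>K. norm (h z) \<le> B" if K: "compact K" "K \<subseteq> S" for K
  proof (rule GPicard3[OF S order_refl _ _ _ K])
    show "h holomorphic_on S" if "h \<in> range T" for h
      using that hol by (auto simp: T_def)
    show "h z \<noteq> 0 \<and> h z \<noteq> 1" if "h \<in> range T" "z \<in> S" for h z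
      using that omit by (auto simp: T_def)
    show "norm (h a) \<le> 1" if "h \<in> range T" for h
      using that N by (auto simp: T_def less_imp_le)
  qed blast
  obtain G r where G: "G holomorphic_on S" "strict_mono r"
    "\<And>z. z \<in> S \<Longrightarrow> (\<lambda>n. T (r n) z) \<longlonglongrightarrow> G z"
    "\<And>K. compact K \<Longrightarrow> K \<subseteq> S \<Longrightarrow> uniform_limit K (T \<circ> r) G sequentially"
  proof (rule Montel[OF S(1) _ bounded order_refl])
    show "h holomorphic_on S" if "h \<in> range T" for h
      using that hol by (auto simp: T_def)
  qed blast+
  have "strict_mono (\<lambda>n. r n + N)"
    using G(2) by (simp add: strict_mono_def)
  from LIMSEQ_subseq_LIMSEQ[OF lim this]
  have "G a = 0"
    using LIMSEQ_unique[OF G(3)[OF S(3)]] by (simp add: T_def o_def)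
  have G0: "G z = 0" if "z \<in> S" for z
    using Hurwitz_zero_imp_identically_zero[OF S(1,2) _ G(1) G(4) _ S(3) \<open>G a = 0\<close> that]
      hol omit by (auto simp: T_def)
  show thesis
  proof (rule that)
    show "strict_mono (\<lambda>n. r n + N)" by fact
    fix K assume "compact K" "K \<subseteq> S"
    have "uniform_limit K (T \<circ> r) G sequentially \<longleftrightarrow>
          uniform_limit K (H \<circ> (\<lambda>n. r n + N)) (\<lambda>_. 0) sequentially"
      by (rule uniform_limit_cong') (use G0 \<open>K \<subseteq> S\<close> in \<open>auto simp: T_def\<close>)
    then show "uniform_limit K (H \<circ> (\<lambda>n. r n + N)) (\<lambda>_. 0) sequentially"
      using G(4) \<open>compact K\<close> \<open>K \<subseteq> S\<close> by blast
  qed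
qed

lemma omitting_01_uniformly_small:
  assumes S: "open S" "connected S" "a \<in> S" and K: "compact K" "K \<subseteq> S" and "\<epsilon> > 0"
  obtains \<delta> where "\<delta> > 0"
    "\<And>h z. h holomorphic_on S \<Longrightarrow> (\<forall>w\<in>S. h w \<noteq> 0 \<and> h w \<noteq> 1) \<Longrightarrow> norm (h a) < \<delta>
       \<Longrightarrow> z \<in> K \<Longrightarrow> norm (h z) \<le> \<epsilon>"
proof (rule ccontr)
  assume "\<not> thesis"
  have "\<exists>h z. h holomorphic_on S \<and> (\<forall>w\<in>S. h w \<noteq> 0 \<and> h w \<noteq> 1) \<and>
          norm (h a) < 1 / Suc n \<and> z \<in> K \<and> \<epsilon> < norm (h z)" for n
  proof (rule ccontr)
    assume "\<not> ?thesis"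
    then have "norm (h z) \<le> \<epsilon>"
      if "h holomorphic_on S" "\<forall>w\<in>S. h w \<noteq> 0 \<and> h w \<noteq> 1" "norm (h a) < 1 / Suc n" "z \<in> K" for h z
      using that by (meson not_le)
    then show False
      using that[of "1 / Suc n"] \<open>\<not> thesis\<close> by simp
  qed
  then obtain H Z where H: "\<And>n. H n holomorphic_on S" "\<And>n z. z \<in> S \<Longrightarrow> H n z \<noteq> 0 \<and> H n z \<noteq> 1"
    "\<And>n. norm (H n a) < 1 / Suc n" and Z: "\<And>n. Z n \<in> K" "\<And>n. \<epsilon> < norm (H n (Z n))"
    by metis
  have "(\<lambda>n. H n a) \<longlonglongrightarrow> 0"
    using H(3) by (intro Lim_null_comparison[OF _ LIMSEQ_inverse_real_of_nat])
      (simp add: inverse_eq_divide less_imp_le)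
  then obtain r where "uniform_limit K (H \<circ> r) (\<lambda>_. 0) sequentially"
    using omitting_01_subseq_uniform_limit_0[where H = H, OF S H(1,2)] K by blast
  then obtain n where "\<forall>z\<in>K. norm (H (r n) z) < \<epsilon>"
    using \<open>\<epsilon> > 0\<close> unfolding uniform_limit_sequentially_iff by (simp add: dist_norm) (meson order_refl)
  then show False
    using Z[of "r n"] by fastforce
qed

lemma holomorphic_fixed_point_cball:
  assumes hol: "\<phi> holomorphic_on ball 0 1" and r: "0 < r" "r < 1"
    and into: "\<And>z. norm z \<le> r \<Longrightarrow> norm (\<phi> z) \<le> r"
  obtains z where "z \<in> ball 0 1" "\<phi> z = z"
proof -
  have "cball 0 r \<subseteq> ball (0::complex) 1"
    using r by auto
  then have "continuous_on (cball 0 r) \<phi>"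
    using hol holomorphic_on_imp_continuous_on holomorphic_on_subset by blast
  moreover have "\<phi> \<in> cball 0 r \<rightarrow> cball 0 r"
    using into by simp
  ultimately obtain z where "z \<in> cball 0 r" "\<phi> z = z"
    using brouwer_ball[OF r(1)] by blast
  then show thesis
    using that r by force
qed

lemma holomorphic_meets_line:
  assumes hol: "f holomorphic_on ball 0 1" and r: "0 < r" "r < 1" and "k \<noteq> 0"
    and bound: "\<And>z. norm z \<le> r \<Longrightarrow> norm (f z) \<le> r * norm k"
  obtains z where "z \<in> ball 0 1" "f z = k * z"
proof -
  have "norm (f z / k) \<le> r" if "norm z \<le> r" for z
    using bound[OF that] \<open>k \<noteq> 0\<close> by (simp add: norm_divide divide_le_eq)
  moreover have "(\<lambda>z. f z / k) holomorphic_on ball 0 1"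
    using hol \<open>k \<noteq> 0\<close> by (intro holomorphic_intros)
  ultimately obtain z where "z \<in> ball 0 1" "f z / k = z"
    using holomorphic_fixed_point_cball[of "\<lambda>z. f z / k" r] r by auto
  then show thesis
    using that \<open>k \<noteq> 0\<close> by (auto simp: field_simps)
qed

lemma holomorphic_meets_hyperbola:
  assumes hol: "f holomorphic_on ball 0 1" and nonzero: "\<And>z. z \<in> ball 0 1 \<Longrightarrow> f z \<noteq> 0"
    and r: "0 < r" "r < 1" and bound: "\<And>z. norm z \<le> r \<Longrightarrow> norm (inverse (f z)) \<le> r"
  obtains z where "z \<in> ball 0 1" "z * f z = 1"
proof -
  have "(\<lambda>z. inverse (f z)) holomorphic_on ball 0 1"
    using hol nonzero by (intro holomorphic_intros) auto
  then obtain z where "z \<in> ball 0 1" "inverse (f z) = z"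
    using holomorphic_fixed_point_cball[of "\<lambda>z. inverse (f z)" r] r bound by auto
  then show thesis
    using that nonzero by (auto simp: field_simps)
qed

lemma holomorphic_graph_meets_Sigma_large_k:
  "\<exists>R. \<forall>k::complex. norm k \<ge> R \<longrightarrow>
     (\<forall>f. f holomorphic_on ball 0 1 \<longrightarrow> graph_meets_Sigma k (ball 0 1) f)"
proof -
  obtain \<delta> where "\<delta> > 0" and small:
    "\<And>h z. h holomorphic_on ball 0 1 \<Longrightarrow> (\<forall>w\<in>ball 0 1. h w \<noteq> 0 \<and> h w \<noteq> 1) \<Longrightarrow> norm (h 0) < \<delta>
       \<Longrightarrow> z \<in> cball 0 (1/4) \<Longrightarrow> norm (h z) \<le> 1/4"
    by (rule omitting_01_uniformly_small[of "ball 0 1" 0 "cball 0 (1/4)" "1/4"]) auto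
  obtain B where bounded:
    "\<And>h z. h holomorphic_on ball 0 1 \<Longrightarrow> (\<forall>w\<in>ball 0 1. h w \<noteq> 0 \<and> h w \<noteq> 1) \<Longrightarrow> norm (h 0) \<le> 1 / \<delta>
       \<Longrightarrow> norm z \<le> 1/4 \<Longrightarrow> norm (h z) \<le> B"
    using Schottky_ball[of "1/4" "1 / \<delta>"] by auto
  show ?thesis
  proof (intro exI allI impI)
    fix k :: complex and f
    assume k: "max 1 (4 * B) \<le> norm k" and hol: "f holomorphic_on ball 0 1"
    show "graph_meets_Sigma k (ball 0 1) f"
    proof (rule ccontr)
      assume "\<not> ?thesis"
      then have omit: "\<forall>w\<in>ball 0 1. f w \<noteq> 0 \<and> f w \<noteq> 1"
        and off_line: "\<And>z. z \<in> ball 0 1 \<Longrightarrow> f z \<noteq> k * z"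
        and off_hyperbola: "\<And>z. z \<in> ball 0 1 \<Longrightarrow> z * f z \<noteq> 1"
        by (auto simp: graph_meets_Sigma_def)
      show False
      proof (cases "norm (f 0) \<le> 1 / \<delta>")
        case True
        have "norm (f z) \<le> 1/4 * norm k" if "norm z \<le> 1/4" for z
          using bounded[OF hol omit True that] k by simp
        moreover have "k \<noteq> 0"
          using k by auto
        ultimately show False
          using holomorphic_meets_line[OF hol _ _ \<open>k \<noteq> 0\<close>, of "1/4"] off_line by auto
      next
        case False
        have "inverse (norm (f 0)) < inverse (1 / \<delta>)"
          using False \<open>\<delta> > 0\<close> by (intro less_imp_inverse_less) auto
        then have "norm (inverse (f 0)) < \<delta>"
          by (simp add: norm_inverse)
        then have "norm (inverse (f z)) \<le> 1/4" if "norm z \<le> 1/4" for z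
          using small[of "\<lambda>z. inverse (f z)" z] hol omit that by (auto intro!: holomorphic_intros)
        then show False
          using holomorphic_meets_hyperbola[OF hol _ _ _, of "1/4"] omit off_hyperbola by auto
      qed
    qed
  qed
qed

lemma smooth_on_quadratic_of_functional:
  fixes l :: "'a::real_normed_vector \<Rightarrow> real" and u :: "'b::real_normed_vector"
  assumes l: "bounded_linear l"
  shows "smooth_on S (\<lambda>x. (a + b * l x + c * (l x)\<^sup>2) *\<^sub>R u)"
  unfolding smooth_on_def
proof
  fix n show "Ck_on n S (\<lambda>x. (a + b * l x + c * (l x)\<^sup>2) *\<^sub>R u)"
  proof (induction n arbitrary: a b c)
    case 0
    have "continuous_on S l"
      using l by (simp add: linear_continuous_on)
    then show ?case
      by (simp add: continuous_on_add continuous_on_mult continuous_on_power continuous_on_scaleR)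
  next
    case (Suc n)
    define f' where "f' x v = (b * l v + (2 * c * l v) * l x + 0 * (l x)\<^sup>2) *\<^sub>R u" for x v
    have "((\<lambda>x. (a + b * l x + c * (l x)\<^sup>2) *\<^sub>R u) has_derivative f' x) (at x)" for x
      using bounded_linear_imp_has_derivative[OF l]
      by (auto intro!: derivative_eq_intros simp: f'_def algebra_simps)
    moreover have "Ck_on n S (\<lambda>x. f' x v)" for v
      unfolding f'_def by (rule Suc.IH)
    ultimately show ?case
      by auto
  qed
qed

(* The values \<rho> u (\<rho> \<ge> 1/2 real) lie on the open ray through u, which misses 0 and, as
   Im u \<noteq> 0, also 1. If f z = k z, then z = \<rho> u / k, so Re (\<i> u z) = \<rho> s and
   \<rho> = 1/2 + \<rho>^2, which has no real solution. If z f z = 1, then u z is real, so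
   \<rho> = 1/2 and |u z| = 2, impossible for |u| \<le> 2 and |z| < 1. *)
lemma ray_valued_function_avoids_Sigma:
  fixes u k :: complex
  defines "s \<equiv> Re (\<i> * u\<^sup>2 / k)"
  assumes u: "Im u \<noteq> 0" "norm u \<le> 2" and s: "k \<noteq> 0 \<Longrightarrow> s \<noteq> 0"
  shows "\<not> graph_meets_Sigma k (ball 0 1) (\<lambda>z. (1/2 + (Re (\<i> * u * z))\<^sup>2 / s\<^sup>2) *\<^sub>R u)"
  unfolding graph_meets_Sigma_def
proof clarify
  fix z :: complex
  assume z: "z \<in> ball 0 1"
  define \<rho> where "\<rho> = 1/2 + (Re (\<i> * u * z))\<^sup>2 / s\<^sup>2"
  have \<rho>: "\<rho> \<ge> 1/2"
    by (simp add: \<rho>_def)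
  have "Im (\<rho> *\<^sub>R u) \<noteq> 0"
    using \<rho> u by simp
  moreover assume "\<rho> *\<^sub>R u = 0 \<or> \<rho> *\<^sub>R u = 1 \<or> \<rho> *\<^sub>R u = k * z \<or> z * \<rho> *\<^sub>R u = 1"
  ultimately consider "\<rho> *\<^sub>R u = k * z" | "z * \<rho> *\<^sub>R u = 1"
    by fastforce
  then show False
  proof cases
    case 1
    then have "k \<noteq> 0"
      using \<open>Im (\<rho> *\<^sub>R u) \<noteq> 0\<close> by auto
    with 1 have "\<i> * u * z = \<rho> *\<^sub>R (\<i> * u\<^sup>2 / k)"
      by (simp add: scaleR_conv_of_real field_simps power2_eq_square)
    then have "Re (\<i> * u * z) = \<rho> * s"
      by (simp add: s_def)
    then have "\<rho> = 1/2 + (\<rho> * s)\<^sup>2 / s\<^sup>2"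
      by (metis \<rho>_def)
    then have "\<rho> = 1/2 + \<rho>\<^sup>2"
      using s[OF \<open>k \<noteq> 0\<close>] by (simp add: power_mult_distrib)
    moreover have "(\<rho> - 1/2)\<^sup>2 + 1/4 > 0"
      by (simp add: add_nonneg_pos)
    ultimately show ?thesis
      by (simp add: power2_eq_square algebra_simps)
  next
    case 2
    then have uz: "u * z = of_real (1 / \<rho>)"
      using \<rho> by (simp add: scaleR_conv_of_real field_simps)
    then have "\<rho> = 1/2"
      by (simp add: \<rho>_def mult.assoc)
    have "norm u * norm z = 1 / \<rho>"
      using uz \<rho> by (simp add: norm_divide flip: norm_mult)
    also have "\<dots> = 2"
      unfolding \<open>\<rho> = 1/2\<close> by simp
    finally have "norm u * norm z = 2" .
    moreover have "norm u * norm z \<le> 2 * norm z"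
      using u(2) by (rule mult_right_mono) simp
    ultimately show ?thesis
      using z by simp
  qed
qed

lemma direction_avoiding_Sigma_exists:
  fixes k :: complex
  shows "\<exists>u. Im u \<noteq> 0 \<and> norm u \<le> 2 \<and> (k \<noteq> 0 \<longrightarrow> Re (\<i> * u\<^sup>2 / k) \<noteq> 0)"
proof (cases "Im k = 0")
  case True
  have "norm (1 + \<i>) \<le> 2"
    by (simp add: cmod_def real_le_lsqrt)
  moreover have "k \<noteq> 0 \<Longrightarrow> Re (\<i> * (1 + \<i>)\<^sup>2 / k) \<noteq> 0"
    using True by (simp add: power2_eq_square Re_divide complex_eq_iff)
  ultimately show ?thesis
    by (intro exI[of _ "1 + \<i>"]) simp
next
  case False
  then show ?thesis
    by (intro exI[of _ \<i>]) (simp add: Re_divide)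
qed

lemma smooth_function_avoiding_Sigma:
  "\<exists>f. smooth_on (ball 0 1) f \<and> \<not> graph_meets_Sigma k (ball 0 1) f"
proof -
  obtain u where u: "Im u \<noteq> 0" "norm u \<le> 2" "k \<noteq> 0 \<longrightarrow> Re (\<i> * u\<^sup>2 / k) \<noteq> 0"
    using direction_avoiding_Sigma_exists by blast
  define s where "s = Re (\<i> * u\<^sup>2 / k)"
  define f where "f = (\<lambda>z. (1/2 + (Re (\<i> * u * z))\<^sup>2 / s\<^sup>2) *\<^sub>R u)"
  have "bounded_linear (\<lambda>z. Re (\<i> * u * z))"
    by (intro bounded_linear_compose[OF bounded_linear_Re] bounded_linear_mult_right)
  from smooth_on_quadratic_of_functional[OF this, of _ "1/2" 0 "1 / s\<^sup>2" u]
  have "smooth_on (ball 0 1) f"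
    by (simp add: f_def)
  moreover have "\<not> graph_meets_Sigma k (ball 0 1) f"
    unfolding f_def s_def using u by (intro ray_valued_function_avoids_Sigma) auto
  ultimately show ?thesis by blast
qed

theorem mainTheorem1:
  shows "(\<exists>k::real. k > 0 \<and>
            (\<forall>f. f holomorphic_on ball 0 1 \<longrightarrow> graph_meets_Sigma (complex_of_real k) (ball 0 1) f))
       \<and> (\<exists>R::real. \<forall>k::complex. norm k \<ge> R \<longrightarrow>
            (\<forall>f. f holomorphic_on ball 0 1 \<longrightarrow> graph_meets_Sigma k (ball 0 1) f))
       \<and> (\<forall>k::complex. \<exists>f. smooth_on (ball 0 1) f \<and> \<not> graph_meets_Sigma k (ball 0 1) f)"
proof (intro conjI)
  obtain R where R: "\<forall>k::complex. norm k \<ge> R \<longrightarrow>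
      (\<forall>f. f holomorphic_on ball 0 1 \<longrightarrow> graph_meets_Sigma k (ball 0 1) f)"
    using holomorphic_graph_meets_Sigma_large_k by blast
  moreover have "norm (complex_of_real (max R 1)) \<ge> R"
    by simp
  ultimately show "\<exists>k::real. k > 0 \<and>
      (\<forall>f. f holomorphic_on ball 0 1 \<longrightarrow> graph_meets_Sigma (complex_of_real k) (ball 0 1) f)"
    by (intro exI[of _ "max R 1"]) auto
  show "\<exists>R::real. \<forall>k::complex. norm k \<ge> R \<longrightarrow>
      (\<forall>f. f holomorphic_on ball 0 1 \<longrightarrow> graph_meets_Sigma k (ball 0 1) f)"
    by (rule holomorphic_graph_meets_Sigma_large_k)
  show "\<forall>k::complex. \<exists>f. smooth_on (ball 0 1) f \<and> \<not> graph_meets_Sigma k (ball 0 1) f"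
    using smooth_function_avoiding_Sigma by blast
qed

end
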